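(* Let $G\ge 1$, let $\omega_1,\dots,\omega_G>0$ be weights with $\sum_{g=1}^G\omega_g=1$, let $P_1,\dots,P_G\in\mathbb{R}$, let $\beta>0$, let $\bar H\in[0,1]$ and set $C=2\bigl(\bar H-\tfrac12\bigr)\in[-1,1]$. Consider the equation for the unknown $\phi\in\mathbb{R}$ $$\sum_{g=1}^G \omega_g\,\frac{\tanh(\beta P_g)+\tanh(\beta\phi)}{1+\tanh(\beta P_g)\tanh(\beta\phi)}=C,$$ which is equivalent to $\sum_{g=1}^G \omega_g\,\tfrac12\bigl(1+\tanh(\beta(P_g+\phi))\bigr)=\bar H$. Let $\gamma\in\mathbb{R}$, define $A_g=\tanh(\beta P_g+\gamma)$ for $g=1,\dots,G$, and for $D\in[-1,1]$ define $$f(D)=\sum_{g=1}^G\omega_g\,\frac{A_g+D}{1+A_gD}-C,$$ so that with $D=\tanh(\beta\phi-\gamma)$ the equation above reads $f(D)=0$. Suppose that either (i) $\gamma<\min_g(-\beta P_g)=-\max_g(\beta P_g)$, or (ii) $\gamma>\max_g(-\beta P_g)=-\min_g(\beta P_g)$. Consider the Newton–Raphson iteration $D_{k+1}=D_k-f(D_k)/f'(D_k)$, with initial value $D_0=1$ in case (i) and $D_0=-1$ in case (ii). Then the sequence $(D_k)$ converges to the unique solution $D^\star\in[-1,1]$ of $f(D)=0$ (corresponding to the unique solution of the equation above); all terms of the sequence lie in $[-1,1]$; the sequence is monotonically decreasing in case (i) and monotonically increasing in case (ii); and the convergence is quadratic.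
   Context: This arises from enforcing, via a quadrature rule with nodes $\mathbf{x}_g$ and weights $\omega_g$, that the cell average of the THINC function $\tfrac12(1+\tanh(\beta(\mathcal{P}(\mathbf{x})+\phi)))$ equals a given volume fraction $\bar H$; here $P_g=\mathcal{P}(\mathbf{x}_g)$ are the values of a given polynomial at the quadrature nodes, and $\phi$ is the unknown shift. After solving for $D$, one recovers $\phi=\frac1\beta(\tanh^{-1}(D)+\gamma)$. *)

theory Defs
  imports "HOL-Analysis.Analysis"
begin

primrec newton_seq :: "(real \<Rightarrow> real) \<Rightarrow> real \<Rightarrow> nat \<Rightarrow> real" where
  "newton_seq f d0 0 = d0"
| "newton_seq f d0 (Suc k) = newton_seq f d0 k - f (newton_seq f d0 k) / deriv f (newton_seq f d0 k)"

definition thinc_f :: "nat \<Rightarrow> (nat \<Rightarrow> real) \<Rightarrow> (nat \<Rightarrow> real) \<Rightarrow> real \<Rightarrow> real \<Rightarrow> real \<Rightarrow> real \<Rightarrow> real" where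
  "thinc_f G \<omega> P \<beta> \<gamma> Hbar D =
     (let C = 2 * (Hbar - 1/2); A = (\<lambda>g. tanh (\<beta> * P g + \<gamma>))
      in (\<Sum>g=1..G. \<omega> g * ((A g + D) / (1 + A g * D))) - C)"

end

(*
  Write f(D) = (\<Sum>g. \<omega> g * m_g(D)) - C with the Moebius maps m_g(D) = (A_g + D) / (1 + A_g D),
  where |A_g| \<le> a < 1. Each m_g is increasing on [-1, 1] and fixes -1 and 1, so f has exactly one
  root E there. Comparing secant and tangent slopes of the m_g shows that the Newton error
  N(D) - E is (D - E) times a weighted mean, with the positive summands of f'(D) as weights, of
  the lags A_g (E - D) / (1 + A_g E). The lags are at most 2a / (1 + a) < 1 and at most
  a |D - E| / (1 - a) in absolute value, and they are nonnegative whenever every A_g has the sign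
  of E - D. The choice of the shift and of the starting point D_0 = \<plusminus>1 makes every A_g have the
  sign of E - D_0, so all iterates stay between E and D_0 and approach E monotonically,
  geometrically, and finally quadratically. Only the signs of \<beta> P_g + \<gamma> matter.
*)
theory Submission
  imports Defs
begin

definition newton_step :: "(real \<Rightarrow> real) \<Rightarrow> real \<Rightarrow> real" where
  "newton_step f y = y - f y / deriv f y"

lemma newton_seq_Suc_step: "newton_seq f d0 (Suc k) = newton_step f (newton_seq f d0 k)"
  by (simp add: newton_step_def)

lemma in_closed_segment_real:
  fixes y E d0 t :: real
  assumes "y - E = t * (d0 - E)" "0 \<le> t" "t \<le> 1"
  shows "y \<in> closed_segment E d0"
  unfolding in_segment using assms by (intro exI[of _ t]) (simp add: algebra_simps)

lemma closed_segment_subset_unit_interval: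
  fixes E d0 :: real
  assumes "\<bar>E\<bar> \<le> 1" "\<bar>d0\<bar> \<le> 1"
  shows "closed_segment E d0 \<subseteq> {-1..1}"
  using assms by (intro closed_segment_subset) (auto simp: abs_le_iff)

lemma mult_diff_nonneg_closed_segment:
  fixes A E d0 y :: real
  assumes "y \<in> closed_segment E d0" "0 \<le> A * (E - d0)"
  shows "0 \<le> A * (E - y)"
proof -
  obtain u where u: "0 \<le> u" "u \<le> 1" and y: "y = (1 - u) * E + u * d0"
    using assms(1) by (auto simp: in_segment)
  have "0 \<le> u * (A * (E - d0))"
    using assms(2) u by simp
  also have "\<dots> = A * (E - y)"
    unfolding y by (simp add: algebra_simps)
  finally show ?thesis .
qed

locale newton_contraction =
  fixes f :: "real \<Rightarrow> real" and E d0 q :: real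
  assumes q_nonneg: "0 \<le> q" and q_less_1: "q < 1"
    and step_towards: "\<And>y. y \<in> closed_segment E d0 \<Longrightarrow> \<exists>r\<in>{0..q}. newton_step f y - E = r * (y - E)"
begin

lemma q_power_le_1: "q ^ k \<le> 1"
  using q_nonneg q_less_1 by (simp add: power_le_one)

lemma newton_seq_distance: "\<exists>t\<in>{0..q ^ k}. newton_seq f d0 k - E = t * (d0 - E)"
proof (induction k)
  case 0
  show ?case by (intro bexI[of _ 1]) auto
next
  case (Suc k)
  then obtain t where t: "t \<in> {0..q ^ k}" "newton_seq f d0 k - E = t * (d0 - E)"
    by blast
  have "newton_seq f d0 k \<in> closed_segment E d0"
    using t q_power_le_1[of k] by (intro in_closed_segment_real[of _ _ t]) auto
  then obtain r where r: "r \<in> {0..q}" "newton_step f (newton_seq f d0 k) - E = r * (newton_seq f d0 k - E)"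
    using step_towards by blast
  have "r * t \<in> {0..q ^ Suc k}"
    using r t by (auto intro: mult_mono)
  then show ?case
    using r t unfolding newton_seq_Suc_step by (intro bexI[of _ "r * t"]) simp_all
qed

lemma newton_seq_in_segment: "newton_seq f d0 k \<in> closed_segment E d0"
proof -
  obtain t where t: "t \<in> {0..q ^ k}" "newton_seq f d0 k - E = t * (d0 - E)"
    using newton_seq_distance by blast
  then show ?thesis
    using q_power_le_1[of k] by (intro in_closed_segment_real[of _ _ t]) auto
qed

lemma newton_seq_tendsto: "newton_seq f d0 \<longlonglongrightarrow> E"
proof (rule LIM_zero_cancel, rule Lim_null_comparison)
  show "\<forall>\<^sub>F k in sequentially. norm (newton_seq f d0 k - E) \<le> q ^ k * \<bar>d0 - E\<bar>"
  proof (rule always_eventually, rule allI)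
    fix k
    obtain t where "t \<in> {0..q ^ k}" "newton_seq f d0 k - E = t * (d0 - E)"
      using newton_seq_distance by blast
    then show "norm (newton_seq f d0 k - E) \<le> q ^ k * \<bar>d0 - E\<bar>"
      by (simp add: abs_mult mult_right_mono)
  qed
  show "(\<lambda>k. q ^ k * \<bar>d0 - E\<bar>) \<longlonglongrightarrow> 0"
    using q_nonneg q_less_1 by (intro tendsto_mult_left_zero LIMSEQ_power_zero) auto
qed

lemma newton_step_from_segment:
  assumes "y \<in> closed_segment E d0"
  obtains r where "0 \<le> r" "r \<le> 1" "newton_step f y - E = r * (y - E)"
  using step_towards[OF assms] q_less_1 by fastforce

lemma newton_seq_decseq:
  assumes "E \<le> d0"
  shows "decseq (newton_seq f d0)"
proof (rule decseq_SucI)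
  fix k
  let ?y = "newton_seq f d0 k"
  have y: "?y \<in> closed_segment E d0" by (rule newton_seq_in_segment)
  then have "E \<le> ?y" using assms by (simp add: closed_segment_eq_real_ivl)
  moreover obtain r where "0 \<le> r" "r \<le> 1" "newton_step f ?y - E = r * (?y - E)"
    using newton_step_from_segment[OF y] .
  ultimately have "newton_step f ?y - E \<le> ?y - E"
    by (simp add: mult_left_le_one_le)
  then show "newton_seq f d0 (Suc k) \<le> ?y"
    unfolding newton_seq_Suc_step by simp
qed

lemma newton_seq_incseq:
  assumes "d0 \<le> E"
  shows "incseq (newton_seq f d0)"
proof (rule incseq_SucI)
  fix k
  let ?y = "newton_seq f d0 k"
  have y: "?y \<in> closed_segment E d0" by (rule newton_seq_in_segment)
  then have "?y \<le> E" using assms by (auto simp: closed_segment_eq_real_ivl split: if_splits)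
  moreover obtain r where r: "0 \<le> r" "r \<le> 1" "newton_step f ?y - E = r * (?y - E)"
    using newton_step_from_segment[OF y] .
  ultimately have "r * (E - ?y) \<le> E - ?y"
    by (simp add: mult_left_le_one_le)
  with r(3) show "?y \<le> newton_seq f d0 (Suc k)"
    unfolding newton_seq_Suc_step by (simp add: algebra_simps)
qed

end

definition mobius :: "real \<Rightarrow> real \<Rightarrow> real" where
  "mobius A D = (A + D) / (1 + A * D)"

lemma mobius_has_real_derivative:
  assumes "1 + A * D \<noteq> 0"
  shows "(mobius A has_real_derivative (1 - A\<^sup>2) / (1 + A * D)\<^sup>2) (at D)"
proof -
  have "((\<lambda>D. (A + D) / (1 + A * D)) has_real_derivative
      ((0 + 1) * (1 + A * D) - (A + D) * (0 + A * 1)) / ((1 + A * D) * (1 + A * D))) (at D)"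
    using assms by (intro derivative_eq_intros) auto
  moreover have "((0 + 1) * (1 + A * D) - (A + D) * (0 + A * 1)) / ((1 + A * D) * (1 + A * D))
      = (1 - A\<^sup>2) / (1 + A * D)\<^sup>2"
    by (simp add: power2_eq_square algebra_simps)
  ultimately show ?thesis
    unfolding mobius_def[abs_def] by simp
qed

text \<open>\<open>1 - mobius_lag A D E = (1 + A D) / (1 + A E)\<close> is the ratio of the secant slope of
  \<open>mobius A\<close> between \<open>E\<close> and \<open>D\<close> to its tangent slope at \<open>D\<close>.\<close>
definition mobius_lag :: "real \<Rightarrow> real \<Rightarrow> real \<Rightarrow> real" where
  "mobius_lag A D E = A * (E - D) / (1 + A * E)"

lemma mobius_diff:
  assumes "1 + A * D \<noteq> 0" "1 + A * E \<noteq> 0"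
  shows "mobius A D - mobius A E = (1 - A\<^sup>2) / (1 + A * D)\<^sup>2 * (D - E) * (1 - mobius_lag A D E)"
  using assms unfolding mobius_def mobius_lag_def by (simp add: divide_simps power2_eq_square) algebra

lemma mobius_1: "A \<noteq> -1 \<Longrightarrow> mobius A 1 = 1"
  unfolding mobius_def by (simp add: add.commute)

lemma mobius_neg_1: "A \<noteq> 1 \<Longrightarrow> mobius A (-1) = -1"
  unfolding mobius_def by (simp add: field_simps)

lemma one_add_mult_bounds:
  fixes A D a :: real
  assumes "\<bar>A\<bar> \<le> a" "\<bar>D\<bar> \<le> 1"
  shows "1 - a \<le> 1 + A * D" "1 + A * D \<le> 1 + a"
proof -
  have "\<bar>A * D\<bar> \<le> \<bar>A\<bar>" using assms by (simp add: abs_mult mult_left_le)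
  then show "1 - a \<le> 1 + A * D" "1 + A * D \<le> 1 + a" using assms by auto
qed

lemma weighted_mean_bounds:
  fixes d e :: "'i \<Rightarrow> real"
  assumes "finite I" "\<And>g. g \<in> I \<Longrightarrow> 0 \<le> d g" "0 < sum d I"
    and "\<And>g. g \<in> I \<Longrightarrow> lo \<le> e g" "\<And>g. g \<in> I \<Longrightarrow> e g \<le> hi"
  shows "lo \<le> (\<Sum>g\<in>I. d g * e g) / sum d I" "(\<Sum>g\<in>I. d g * e g) / sum d I \<le> hi"
proof -
  have "lo * sum d I \<le> (\<Sum>g\<in>I. d g * e g)"
    unfolding sum_distrib_left using assms by (intro sum_mono) (metis mult.commute mult_right_mono)
  then show "lo \<le> (\<Sum>g\<in>I. d g * e g) / sum d I"
    using assms(3) by (simp add: pos_le_divide_eq)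
  have "(\<Sum>g\<in>I. d g * e g) \<le> hi * sum d I"
    unfolding sum_distrib_left using assms by (intro sum_mono) (metis mult.commute mult_right_mono)
  then show "(\<Sum>g\<in>I. d g * e g) / sum d I \<le> hi"
    using assms(3) by (simp add: pos_divide_le_eq)
qed

lemma mobius_lag_le:
  fixes A D E a :: real
  assumes "\<bar>A\<bar> \<le> a" "a < 1" "\<bar>D\<bar> \<le> 1" "\<bar>E\<bar> \<le> 1"
  shows "mobius_lag A D E \<le> 2 * a / (1 + a)"
proof -
  have D: "1 - a \<le> 1 + A * D" and E: "1 + A * E \<le> 1 + a" "1 - a \<le> 1 + A * E"
    using one_add_mult_bounds assms by blast+
  have "mobius_lag A D E = 1 - (1 + A * D) / (1 + A * E)"
    using E assms(2) unfolding mobius_lag_def by (simp add: field_simps)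
  also have "\<dots> \<le> 1 - (1 - a) / (1 + a)"
    using D E assms(2) by (intro diff_left_mono frac_le) auto
  also have "\<dots> = 2 * a / (1 + a)"
    using E assms(2) by (simp add: field_simps)
  finally show ?thesis .
qed

lemma abs_mobius_lag_le:
  fixes A D E a :: real
  assumes "\<bar>A\<bar> \<le> a" "a < 1" "\<bar>E\<bar> \<le> 1"
  shows "\<bar>mobius_lag A D E\<bar> \<le> a / (1 - a) * \<bar>D - E\<bar>"
proof -
  have E: "1 - a \<le> 1 + A * E"
    using one_add_mult_bounds assms by blast
  have "\<bar>mobius_lag A D E\<bar> = \<bar>A\<bar> * \<bar>D - E\<bar> / (1 + A * E)"
    using E assms(2) unfolding mobius_lag_def by (simp add: abs_mult abs_minus_commute)
  also have "\<dots> \<le> a * \<bar>D - E\<bar> / (1 - a)"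
    using E assms by (intro frac_le mult_right_mono) auto
  finally show ?thesis by simp
qed

definition mobius_mix :: "'i set \<Rightarrow> ('i \<Rightarrow> real) \<Rightarrow> ('i \<Rightarrow> real) \<Rightarrow> real \<Rightarrow> real \<Rightarrow> real" where
  "mobius_mix I w A C D = (\<Sum>g\<in>I. w g * mobius (A g) D) - C"

definition mobius_mix_deriv :: "'i set \<Rightarrow> ('i \<Rightarrow> real) \<Rightarrow> ('i \<Rightarrow> real) \<Rightarrow> real \<Rightarrow> real" where
  "mobius_mix_deriv I w A D = (\<Sum>g\<in>I. w g * ((1 - (A g)\<^sup>2) / (1 + A g * D)\<^sup>2))"

locale mobius_mixture =
  fixes I :: "'i set" and w A :: "'i \<Rightarrow> real" and a :: real
  assumes finite_I: "finite I" and I_nonempty: "I \<noteq> {}"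
    and w_pos: "\<And>g. g \<in> I \<Longrightarrow> 0 < w g" and w_sum: "sum w I = 1"
    and A_bound: "\<And>g. g \<in> I \<Longrightarrow> \<bar>A g\<bar> \<le> a" and a_less_1: "a < 1"
begin

lemma a_nonneg: "0 \<le> a"
  using I_nonempty A_bound by fastforce

lemma denominator_pos: "g \<in> I \<Longrightarrow> \<bar>D\<bar> \<le> 1 \<Longrightarrow> 0 < 1 + A g * D"
  using one_add_mult_bounds(1)[OF A_bound] a_less_1 by fastforce

lemma A_sq_less_1: "g \<in> I \<Longrightarrow> (A g)\<^sup>2 < 1"
  using A_bound a_less_1 by (metis abs_square_less_1 le_less_trans)

lemma mobius_mix_has_real_derivative:
  assumes "\<bar>D\<bar> \<le> 1"
  shows "(mobius_mix I w A C has_real_derivative mobius_mix_deriv I w A D) (at D)"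
proof -
  have "((\<lambda>D. (\<Sum>g\<in>I. w g * mobius (A g) D) - C) has_real_derivative
      (\<Sum>g\<in>I. w g * ((1 - (A g)\<^sup>2) / (1 + A g * D)\<^sup>2)) - 0) (at D)"
    using denominator_pos[OF _ assms]
    by (intro DERIV_diff DERIV_sum DERIV_const DERIV_cmult mobius_has_real_derivative)
      (metis less_irrefl)
  then show ?thesis
    unfolding mobius_mix_def[abs_def] mobius_mix_deriv_def by simp
qed

lemma deriv_mobius_mix: "\<bar>D\<bar> \<le> 1 \<Longrightarrow> deriv (mobius_mix I w A C) D = mobius_mix_deriv I w A D"
  by (rule DERIV_imp_deriv) (rule mobius_mix_has_real_derivative)

lemma mobius_mix_deriv_pos: "\<bar>D\<bar> \<le> 1 \<Longrightarrow> 0 < mobius_mix_deriv I w A D"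
  unfolding mobius_mix_deriv_def using finite_I I_nonempty
  by (intro sum_pos mult_pos_pos divide_pos_pos w_pos zero_less_power denominator_pos)
    (auto dest: A_sq_less_1)

lemma mobius_mix_neg_1: "mobius_mix I w A C (-1) = -1 - C"
proof -
  have "mobius (A g) (-1) = -1" if "g \<in> I" for g
    using A_bound[OF that] a_less_1 by (intro mobius_neg_1) auto
  then show ?thesis
    unfolding mobius_mix_def using w_sum by (simp add: sum_negf)
qed

lemma mobius_mix_1: "mobius_mix I w A C 1 = 1 - C"
proof -
  have "mobius (A g) 1 = 1" if "g \<in> I" for g
    using A_bound[OF that] a_less_1 by (intro mobius_1) auto
  then show ?thesis
    unfolding mobius_mix_def using w_sum by simp
qed

lemma mobius_mix_strict_mono:
  assumes "-1 \<le> D" "D < E" "E \<le> 1"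
  shows "mobius_mix I w A C D < mobius_mix I w A C E"
proof -
  have "\<exists>y. (mobius_mix I w A C has_real_derivative y) (at x) \<and> 0 < y" if "D \<le> x" "x \<le> E" for x
  proof -
    have "\<bar>x\<bar> \<le> 1" using that assms by auto
    then show ?thesis using mobius_mix_has_real_derivative mobius_mix_deriv_pos by blast
  qed
  then show ?thesis using DERIV_pos_imp_increasing[OF assms(2)] by blast
qed

lemma mobius_mix_unique_root:
  assumes "\<bar>C\<bar> \<le> 1"
  shows "\<exists>!E. E \<in> {-1..1} \<and> mobius_mix I w A C E = 0"
proof (rule ex_ex1I)
  show "\<exists>E. E \<in> {-1..1} \<and> mobius_mix I w A C E = 0"
  proof -
    have "continuous_on {-1..1} (mobius_mix I w A C)"
      by (intro continuous_at_imp_continuous_on ballI DERIV_isCont[OF mobius_mix_has_real_derivative])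
        auto
    then show ?thesis
      using IVT'[of "mobius_mix I w A C" "-1" 0 1] assms
      by (auto simp: mobius_mix_neg_1 mobius_mix_1)
  qed
next
  fix D E
  assume "D \<in> {-1..1} \<and> mobius_mix I w A C D = 0" "E \<in> {-1..1} \<and> mobius_mix I w A C E = 0"
  then show "D = E"
    using mobius_mix_strict_mono[of D E C] mobius_mix_strict_mono[of E D C]
    by (metis atLeastAtMost_iff less_irrefl linorder_neqE_linordered_idom)
qed

lemma newton_step_mobius_mix:
  assumes D: "\<bar>D\<bar> \<le> 1" and E: "\<bar>E\<bar> \<le> 1" and root: "mobius_mix I w A C E = 0"
  shows "newton_step (mobius_mix I w A C) D - E = (D - E) *
    ((\<Sum>g\<in>I. w g * ((1 - (A g)\<^sup>2) / (1 + A g * D)\<^sup>2) * mobius_lag (A g) D E)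
      / mobius_mix_deriv I w A D)"
proof -
  define d where "d g = w g * ((1 - (A g)\<^sup>2) / (1 + A g * D)\<^sup>2)" for g
  define e where "e g = mobius_lag (A g) D E" for g
  have "mobius_mix I w A C D = mobius_mix I w A C D - mobius_mix I w A C E"
    using root by simp
  also have "\<dots> = (\<Sum>g\<in>I. w g * (mobius (A g) D - mobius (A g) E))"
    unfolding mobius_mix_def by (simp add: sum_subtractf right_diff_distrib)
  also have "\<dots> = (\<Sum>g\<in>I. (D - E) * (d g - d g * e g))"
  proof (rule sum.cong[OF refl])
    fix g assume "g \<in> I"
    then have nonzero: "1 + A g * D \<noteq> 0" "1 + A g * E \<noteq> 0"
      using denominator_pos D E by (metis less_irrefl)+
    define X where "X = (1 - (A g)\<^sup>2) / (1 + A g * D)\<^sup>2"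
    have "w g * (mobius (A g) D - mobius (A g) E) = w g * (X * (D - E) * (1 - e g))"
      unfolding mobius_diff[OF nonzero] X_def e_def ..
    also have "\<dots> = (D - E) * (w g * X - w g * X * e g)"
      by (simp add: algebra_simps)
    finally show "w g * (mobius (A g) D - mobius (A g) E) = (D - E) * (d g - d g * e g)"
      unfolding d_def X_def .
  qed
  also have "\<dots> = (D - E) * (mobius_mix_deriv I w A D - (\<Sum>g\<in>I. d g * e g))"
    unfolding mobius_mix_deriv_def d_def[symmetric]
    by (simp add: right_diff_distrib sum_subtractf sum_distrib_left)
  finally have "mobius_mix I w A C D = (D - E) * (mobius_mix_deriv I w A D - (\<Sum>g\<in>I. d g * e g))" .
  then show ?thesis
    using mobius_mix_deriv_pos[OF D] deriv_mobius_mix[OF D]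
    unfolding newton_step_def d_def e_def by (simp add: field_simps)
qed

lemma newton_step_mobius_mix_quadratic:
  assumes D: "\<bar>D\<bar> \<le> 1" and E: "\<bar>E\<bar> \<le> 1" and root: "mobius_mix I w A C E = 0"
  shows "\<bar>newton_step (mobius_mix I w A C) D - E\<bar> \<le> a / (1 - a) * (D - E)\<^sup>2"
proof -
  define d where "d g = w g * ((1 - (A g)\<^sup>2) / (1 + A g * D)\<^sup>2)" for g
  define e where "e g = mobius_lag (A g) D E" for g
  define K where "K = a / (1 - a) * \<bar>D - E\<bar>"
  have d_nonneg: "0 \<le> d g" if "g \<in> I" for g
    using w_pos[OF that] A_sq_less_1[OF that] unfolding d_def by simp
  have e_bound: "-K \<le> e g \<and> e g \<le> K" if "g \<in> I" for g
    using abs_mobius_lag_le[OF A_bound[OF that] a_less_1 E, of D] unfolding e_def K_def abs_le_iff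
    by linarith
  have "sum d I = mobius_mix_deriv I w A D"
    unfolding d_def mobius_mix_deriv_def ..
  then have "\<bar>(\<Sum>g\<in>I. d g * e g) / mobius_mix_deriv I w A D\<bar> \<le> K"
    using weighted_mean_bounds[of I d "-K" e K] finite_I d_nonneg e_bound mobius_mix_deriv_pos[OF D]
    by (simp add: abs_le_iff)
  then have "\<bar>D - E\<bar> * \<bar>(\<Sum>g\<in>I. d g * e g) / mobius_mix_deriv I w A D\<bar> \<le> \<bar>D - E\<bar> * K"
    by (rule mult_left_mono) simp
  moreover have "\<bar>newton_step (mobius_mix I w A C) D - E\<bar>
      = \<bar>D - E\<bar> * \<bar>(\<Sum>g\<in>I. d g * e g) / mobius_mix_deriv I w A D\<bar>"
    unfolding newton_step_mobius_mix[OF D E root] d_def e_def by (simp only: abs_mult)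
  moreover have "\<bar>D - E\<bar> * K = a / (1 - a) * (D - E)\<^sup>2"
    unfolding K_def by (metis abs_mult_self_eq mult.left_commute power2_eq_square)
  ultimately show ?thesis
    by simp
qed

lemma newton_contraction_mobius_mix:
  assumes E: "\<bar>E\<bar> \<le> 1" and root: "mobius_mix I w A C E = 0" and d0: "\<bar>d0\<bar> \<le> 1"
    and towards_root: "\<forall>g\<in>I. 0 \<le> A g * (E - d0)"
  shows "newton_contraction (mobius_mix I w A C) E d0 (2 * a / (1 + a))"
proof
  show "0 \<le> 2 * a / (1 + a)" "2 * a / (1 + a) < 1"
    using a_nonneg a_less_1 by auto
  fix y
  assume y_segment: "y \<in> closed_segment E d0"
  then have y: "\<bar>y\<bar> \<le> 1"
    using closed_segment_subset_unit_interval[OF E d0] by (auto simp: abs_le_iff)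
  define d where "d g = w g * ((1 - (A g)\<^sup>2) / (1 + A g * y)\<^sup>2)" for g
  define e where "e g = mobius_lag (A g) y E" for g
  define r where "r = (\<Sum>g\<in>I. d g * e g) / mobius_mix_deriv I w A y"
  have d_nonneg: "0 \<le> d g" if "g \<in> I" for g
    using w_pos[OF that] A_sq_less_1[OF that] unfolding d_def by simp
  have e_nonneg: "0 \<le> e g" if "g \<in> I" for g
    using mult_diff_nonneg_closed_segment[OF y_segment] towards_root that denominator_pos[OF that E]
    unfolding e_def mobius_lag_def by simp
  have e_le: "e g \<le> 2 * a / (1 + a)" if "g \<in> I" for g
    using mobius_lag_le[OF A_bound[OF that] a_less_1 y E] unfolding e_def .
  have "sum d I = mobius_mix_deriv I w A y"
    unfolding d_def mobius_mix_deriv_def ..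
  then have "r \<in> {0..2 * a / (1 + a)}"
    using weighted_mean_bounds[of I d 0 e "2 * a / (1 + a)"] finite_I d_nonneg e_nonneg e_le
      mobius_mix_deriv_pos[OF y]
    unfolding r_def by simp
  moreover have "newton_step (mobius_mix I w A C) y - E = r * (y - E)"
    unfolding newton_step_mobius_mix[OF y E root] r_def d_def e_def by simp
  ultimately show "\<exists>r\<in>{0..2 * a / (1 + a)}. newton_step (mobius_mix I w A C) y - E = r * (y - E)"
    by blast
qed

lemma newton_seq_mobius_mix:
  assumes E: "\<bar>E\<bar> \<le> 1" and root: "mobius_mix I w A C E = 0" and d0: "\<bar>d0\<bar> \<le> 1"
    and towards_root: "\<forall>g\<in>I. 0 \<le> A g * (E - d0)"
  defines "x \<equiv> newton_seq (mobius_mix I w A C) d0"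
  shows "\<forall>k. x k \<in> {-1..1}" and "x \<longlonglongrightarrow> E"
    and "E \<le> d0 \<Longrightarrow> decseq x" and "d0 \<le> E \<Longrightarrow> incseq x"
    and "\<forall>k. \<bar>x (Suc k) - E\<bar> \<le> a / (1 - a) * (x k - E)\<^sup>2"
proof -
  interpret newton_contraction "mobius_mix I w A C" E d0 "2 * a / (1 + a)"
    using newton_contraction_mobius_mix[OF E root d0 towards_root] .
  show range: "\<forall>k. x k \<in> {-1..1}"
    using newton_seq_in_segment closed_segment_subset_unit_interval[OF E d0] unfolding x_def by blast
  show "x \<longlonglongrightarrow> E"
    unfolding x_def by (rule newton_seq_tendsto)
  show "E \<le> d0 \<Longrightarrow> decseq x" "d0 \<le> E \<Longrightarrow> incseq x"
    unfolding x_def by (fact newton_seq_decseq newton_seq_incseq)+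
  show "\<forall>k. \<bar>x (Suc k) - E\<bar> \<le> a / (1 - a) * (x k - E)\<^sup>2"
    using newton_step_mobius_mix_quadratic range E root
    unfolding x_def newton_seq_Suc_step by (simp add: abs_le_iff)
qed

end

lemma thinc_f_eq_mobius_mix:
  "thinc_f G \<omega> P \<beta> \<gamma> Hbar = mobius_mix {1..G} \<omega> (\<lambda>g. tanh (\<beta> * P g + \<gamma>)) (2 * (Hbar - 1/2))"
  by (simp add: fun_eq_iff thinc_f_def mobius_mix_def mobius_def)

lemma mobius_mixture_tanh:
  fixes h :: "'i \<Rightarrow> real"
  assumes "finite I" "I \<noteq> {}" "\<And>g. g \<in> I \<Longrightarrow> 0 < w g" "sum w I = 1"
  shows "mobius_mixture I w (\<lambda>g. tanh (h g)) (Max ((\<lambda>g. \<bar>tanh (h g)\<bar>) ` I))"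
proof
  show "\<bar>tanh (h g)\<bar> \<le> Max ((\<lambda>g. \<bar>tanh (h g)\<bar>) ` I)" if "g \<in> I" for g
    using assms(1) that by (intro Max_ge) auto
  have "Max ((\<lambda>g. \<bar>tanh (h g)\<bar>) ` I) \<in> (\<lambda>g. \<bar>tanh (h g)\<bar>) ` I"
    using assms(1,2) by (intro Max_in) auto
  then show "Max ((\<lambda>g. \<bar>tanh (h g)\<bar>) ` I) < 1"
    using tanh_real_bounds by (auto simp: abs_less_iff)
qed (use assms in auto)

lemma tanh_add_neg_below_Max:
  fixes h :: "'i \<Rightarrow> real" and \<gamma> :: real
  assumes "finite I" "g \<in> I" "\<gamma> < - Max (h ` I)"
  shows "tanh (h g + \<gamma>) < 0"
proof -
  have "h g \<le> Max (h ` I)"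
    using assms(1,2) by (intro Max_ge) auto
  then show ?thesis
    using assms(3) by simp
qed

lemma tanh_add_pos_above_Min:
  fixes h :: "'i \<Rightarrow> real" and \<gamma> :: real
  assumes "finite I" "g \<in> I" "\<gamma> > - Min (h ` I)"
  shows "tanh (h g + \<gamma>) > 0"
proof -
  have "Min (h ` I) \<le> h g"
    using assms(1,2) by (intro Min_le) auto
  then show ?thesis
    using assms(3) by simp
qed

lemma tanh_add_start_towards_root:
  fixes h :: "'i \<Rightarrow> real" and \<gamma> E :: real
  assumes "finite I" "g \<in> I" "E \<in> {-1..1}" "\<gamma> < - Max (h ` I) \<or> \<gamma> > - Min (h ` I)"
  shows "0 \<le> tanh (h g + \<gamma>) * (E - (if \<gamma> < - Max (h ` I) then 1 else -1))"
proof (cases "\<gamma> < - Max (h ` I)")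
  case True
  then show ?thesis
    using tanh_add_neg_below_Max[OF assms(1,2) True] assms(3) by (simp add: mult_nonpos_nonpos)
next
  case False
  then have above: "\<gamma> > - Min (h ` I)"
    using assms(4) by blast
  show ?thesis
    using tanh_add_pos_above_Min[OF assms(1,2) above] False assms(3) by simp
qed

theorem lemma1:
  fixes G :: nat and \<omega> P :: "nat \<Rightarrow> real" and \<beta> Hbar \<gamma> :: real
  assumes G: "G \<ge> 1"
    and w_pos: "\<And>g. g \<in> {1..G} \<Longrightarrow> \<omega> g > 0"
    and w_sum: "(\<Sum>g=1..G. \<omega> g) = 1"
    and beta: "\<beta> > 0"
    and Hbar: "Hbar \<in> {0..1}"
    and cases: "\<gamma> < - Max ((\<lambda>g. \<beta> * P g) ` {1..G}) \<or> \<gamma> > - Min ((\<lambda>g. \<beta> * P g) ` {1..G})"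
  defines "f \<equiv> thinc_f G \<omega> P \<beta> \<gamma> Hbar"
    and "D \<equiv> newton_seq (thinc_f G \<omega> P \<beta> \<gamma> Hbar) (if \<gamma> < - Max ((\<lambda>g. \<beta> * P g) ` {1..G}) then 1 else -1)"
  shows "\<exists>Ds. Ds \<in> {-1..1} \<and> f Ds = 0
            \<and> (\<forall>E \<in> {-1..1}. f E = 0 \<longrightarrow> E = Ds)
            \<and> (\<forall>k. D k \<in> {-1..1})
            \<and> D \<longlonglongrightarrow> Ds
            \<and> (\<gamma> < - Max ((\<lambda>g. \<beta> * P g) ` {1..G}) \<longrightarrow> decseq D)
            \<and> (\<gamma> > - Min ((\<lambda>g. \<beta> * P g) ` {1..G}) \<longrightarrow> incseq D)
            \<and> (\<exists>M. \<forall>k. \<bar>D (Suc k) - Ds\<bar> \<le> M * (D k - Ds)\<^sup>2)"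
proof -
  define A where "A = (\<lambda>g. tanh (\<beta> * P g + \<gamma>))"
  define d0 :: real where "d0 = (if \<gamma> < - Max ((\<lambda>g. \<beta> * P g) ` {1..G}) then 1 else -1)"
  interpret mobius_mixture "{1..G}" \<omega> A "Max ((\<lambda>g. \<bar>A g\<bar>) ` {1..G})"
    unfolding A_def using G w_pos w_sum by (intro mobius_mixture_tanh) auto
  have f_eq: "f = mobius_mix {1..G} \<omega> A (2 * (Hbar - 1/2))"
    unfolding f_def A_def by (rule thinc_f_eq_mobius_mix)
  have "\<bar>2 * (Hbar - 1/2)\<bar> \<le> 1"
    using Hbar by auto
  then obtain E where E: "E \<in> {-1..1}" "f E = 0" and unique: "\<forall>E' \<in> {-1..1}. f E' = 0 \<longrightarrow> E' = E"
    unfolding f_eq Ex1_def by (metis mobius_mix_unique_root)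
  have towards_root: "\<forall>g\<in>{1..G}. 0 \<le> A g * (E - d0)"
    using tanh_add_start_towards_root[OF _ _ E(1) cases] unfolding A_def d0_def by simp
  have bounds: "\<bar>E\<bar> \<le> 1" "\<bar>d0\<bar> \<le> 1"
    using E(1) by (auto simp: d0_def)
  have D_eq: "newton_seq (mobius_mix {1..G} \<omega> A (2 * (Hbar - 1/2))) d0 = D"
    unfolding D_def d0_def f_eq[unfolded f_def] ..
  note newton = newton_seq_mobius_mix[OF bounds(1) E(2)[unfolded f_eq] bounds(2) towards_root, unfolded D_eq]
  have "Min ((\<lambda>g. \<beta> * P g) ` {1..G}) \<le> \<beta> * P 1" "\<beta> * P 1 \<le> Max ((\<lambda>g. \<beta> * P g) ` {1..G})"
    using G by (auto intro!: Min_le Max_ge)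
  then have direction: "\<gamma> < - Max ((\<lambda>g. \<beta> * P g) ` {1..G}) \<Longrightarrow> E \<le> d0"
      "\<gamma> > - Min ((\<lambda>g. \<beta> * P g) ` {1..G}) \<Longrightarrow> d0 \<le> E"
    using E(1) unfolding d0_def by auto
  show ?thesis
  proof (rule exI[of _ E], intro conjI impI)
    show "decseq D" if "\<gamma> < - Max ((\<lambda>g. \<beta> * P g) ` {1..G})"
      using newton(3)[OF direction(1)[OF that]] .
    show "incseq D" if "\<gamma> > - Min ((\<lambda>g. \<beta> * P g) ` {1..G})"
      using newton(4)[OF direction(2)[OF that]] .
    show "\<exists>M. \<forall>k. \<bar>D (Suc k) - E\<bar> \<le> M * (D k - E)\<^sup>2"
      using newton(5) by blast
  qed (fact E unique newton(1,2))+
qed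

end
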